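(* Let $Y\sim$ exGPD$(\sigma,\xi)$ with $\sigma>0$, and let $u\in\mathbb{R}$ (with $u<\log(-\sigma/\xi)$ when $\xi<0$). The mean excess function $e_Y(u)=E[Y-u\mid Y>u]$ is finite and given by $$e_Y(u)=\begin{cases}\big(\bar F_Y(u)\big)^{-1}\,B\!\left(\left(1+\xi e^{u}/\sigma\right)^{-1};\,1/\xi,\,0\right), & \xi>0,\\[2pt] \big(\bar F_Y(u)\big)^{-1}\,B\!\left(1+\xi e^{u}/\sigma;\,1-1/\xi,\,0\right), & \xi<0,\\[2pt] \exp\!\left(e^{u}/\sigma\right)\,\Gamma\!\left(0,\,e^{u}/\sigma\right), & \xi=0,\end{cases}$$ where $\bar F_Y(u)=(1+\xi e^u/\sigma)^{-1/\xi}$ for $\xi\neq0$, $B(x;a,0)=\int_0^x t^{a-1}(1-t)^{-1}\,dt$ for $x\in(0,1)$, $a>0$, and $\Gamma(s,x)=\int_x^\infty t^{s-1}e^{-t}\,dt$. Consequently, the conditional tail expectation at level $p\in(0,1)$ is $E[Y\mid Y>y_p]=y_p+e_Y(y_p)$, where $y_p=\log\!\big(\frac{\sigma}{\xi}((1-p)^{-\xi}-1)\big)$ for $\xi\neq0$ is the $p$-quantile of $Y$.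
   Context: For $\sigma>0$ and $\xi\in\mathbb{R}$, the generalized Pareto distribution GPD$(\sigma,\xi)$ has distribution function $G(x)=1-(1+\xi x/\sigma)^{-1/\xi}$ for $\xi\neq 0$, with support $x\ge 0$ if $\xi>0$ and $0\le x\le -\sigma/\xi$ if $\xi<0$; for $\xi=0$ it is $G(x)=1-e^{-x/\sigma}$, $x\ge 0$. A random variable $Y$ has the exponentiated generalized Pareto distribution exGPD$(\sigma,\xi)$ if $Y=\log X$ with $X\sim$ GPD$(\sigma,\xi)$. Equivalently, for $\xi\neq0$ its distribution function is $F_Y(y)=1-(1+\xi e^y/\sigma)^{-1/\xi}$, with support $y\in\mathbb{R}$ if $\xi>0$ and $-\infty<y\le \log(-\sigma/\xi)$ if $\xi<0$. For $\xi=0$ it is $F_Y(y)=1-\exp(-e^{y}/\sigma)$, $y\in\mathbb{R}$. Its density is $f_Y(y)=\frac{e^y}{\sigma}(1+\xi e^y/\sigma)^{-1/\xi-1}$ on the support for $\xi\neq0$, and $f_Y(y)=\frac{1}{\sigma}e^{y-e^y/\sigma}$ for $\xi=0$. We write $\bar F_Y=1-F_Y$. *)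

theory Defs
  imports "HOL-Probability.Probability"
begin

definition exgpd_density :: "real \<Rightarrow> real \<Rightarrow> real \<Rightarrow> real" where
  "exgpd_density \<sigma> \<xi> y =
     (if \<xi> = 0 then exp (y - exp y / \<sigma>) / \<sigma>
      else if 0 < 1 + \<xi> * exp y / \<sigma>
           then exp y / \<sigma> * (1 + \<xi> * exp y / \<sigma>) powr (- 1 / \<xi> - 1)
           else 0)"

definition exgpd_cdf :: "real \<Rightarrow> real \<Rightarrow> real \<Rightarrow> real" where
  "exgpd_cdf \<sigma> \<xi> y =
     (if \<xi> = 0 then 1 - exp (- exp y / \<sigma>)
      else if 0 < 1 + \<xi> * exp y / \<sigma> then 1 - (1 + \<xi> * exp y / \<sigma>) powr (- 1 / \<xi>)
      else 1)"

definition exgpd_sf :: "real \<Rightarrow> real \<Rightarrow> real \<Rightarrow> real" where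
  "exgpd_sf \<sigma> \<xi> y = 1 - exgpd_cdf \<sigma> \<xi> y"

definition exgpd_quantile :: "real \<Rightarrow> real \<Rightarrow> real \<Rightarrow> real" where
  "exgpd_quantile \<sigma> \<xi> p =
     (if \<xi> = 0 then ln (- \<sigma> * ln (1 - p))
      else ln (\<sigma> / \<xi> * ((1 - p) powr (- \<xi>) - 1)))"

definition inc_beta0 :: "real \<Rightarrow> real \<Rightarrow> real" where
  "inc_beta0 x a = (LINT t:{0<..<x}|lborel. t powr (a - 1) / (1 - t))"

definition upper_gamma :: "real \<Rightarrow> real \<Rightarrow> real" where
  "upper_gamma s x = (LINT t:{x<..}|lborel. t powr (s - 1) * exp (- t))"

definition mean_excess :: "'a measure \<Rightarrow> ('a \<Rightarrow> real) \<Rightarrow> real \<Rightarrow> real" where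
  "mean_excess M Y u =
     (\<integral>\<omega>. (Y \<omega> - u) * indicator {u<..} (Y \<omega>) \<partial>M) / measure M {\<omega> \<in> space M. u < Y \<omega>}"

definition cond_tail_exp :: "'a measure \<Rightarrow> ('a \<Rightarrow> real) \<Rightarrow> real \<Rightarrow> real" where
  "cond_tail_exp M Y y =
     (\<integral>\<omega>. Y \<omega> * indicator {y<..} (Y \<omega>) \<partial>M) / measure M {\<omega> \<in> space M. y < Y \<omega>}"

end

theory Submission
  imports Defs
begin

text \<open>
  The computation runs through the stop-loss transform E[max (Y - u) 0]. By Tonelli it is the integral
  over (u, \<infinity>) of the survival function, which in turn is the tail integral of the density.
  Changing variables to t = 1 / (1 + \<xi> e^s / \<sigma>) for \<xi> > 0, t = 1 + \<xi> e^s / \<sigma> for \<xi> < 0 and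
  t = e^s / \<sigma> for \<xi> = 0 turns this integral into B(\<cdot>; 1/\<xi>, 0), B(\<cdot>; 1 - 1/\<xi>, 0) and \<Gamma>(0, \<cdot>).
  Dividing by P(Y > u) gives the mean excess function, and the conditional tail expectation
  follows from Y 1{Y > y} = (Y - y) 1{Y > y} + y 1{Y > y}.
\<close>

section \<open>Integrals on the real line\<close>

lemma set_nn_integral_eq_set_lebesgue_integral:
  fixes f :: "'a \<Rightarrow> real"
  assumes "set_integrable M A f" "\<And>x. x \<in> A \<Longrightarrow> 0 \<le> f x"
  shows "(\<integral>\<^sup>+x\<in>A. ennreal (f x) \<partial>M) = ennreal (set_lebesgue_integral M A f)"
proof -
  have "(\<integral>\<^sup>+x\<in>A. ennreal (f x) \<partial>M) = (\<integral>\<^sup>+x. ennreal (indicator A x *\<^sub>R f x) \<partial>M)"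
    by (intro nn_integral_cong) (auto simp: indicator_def)
  also have "\<dots> = ennreal (set_lebesgue_integral M A f)"
    using assms unfolding set_lebesgue_integral_def set_integrable_def
    by (intro nn_integral_eq_integral) (auto simp: indicator_def)
  finally show ?thesis .
qed

lemma nn_integral_einterval_FTC:
  fixes f F :: "real \<Rightarrow> real" and a b :: ereal
  assumes "a < b"
    and "\<And>x. a < ereal x \<Longrightarrow> ereal x < b \<Longrightarrow> DERIV F x :> f x"
    and "\<And>x. a < ereal x \<Longrightarrow> ereal x < b \<Longrightarrow> isCont f x"
    and nonneg: "\<And>x. a < ereal x \<Longrightarrow> ereal x < b \<Longrightarrow> 0 \<le> f x"
    and "((F \<circ> real_of_ereal) \<longlongrightarrow> A) (at_right a)"
    and "((F \<circ> real_of_ereal) \<longlongrightarrow> B) (at_left b)"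
  shows "(\<integral>\<^sup>+x\<in>einterval a b. ennreal (f x) \<partial>lborel) = ennreal (B - A)"
proof -
  have "AE x in lborel. a < ereal x \<longrightarrow> ereal x < b \<longrightarrow> 0 \<le> f x"
    using nonneg by simp
  note FTC = interval_integral_FTC_nonneg[OF assms(1-3) this assms(5,6)]
  have "0 \<le> f x" if "x \<in> einterval a b" for x
    using nonneg that by (simp add: einterval_iff)
  from set_nn_integral_eq_set_lebesgue_integral[OF FTC(1) this] show ?thesis
    using FTC(2) less_imp_le[OF \<open>a < b\<close>] by (simp add: interval_lebesgue_integral_def)
qed

lemma nn_integral_einterval_substitution:
  fixes f g g' :: "real \<Rightarrow> real" and a b A B :: ereal
  assumes "a < b" "A \<le> B" and f_nonneg: "\<And>x. 0 \<le> f x"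
    and "\<And>x. a < ereal x \<Longrightarrow> ereal x < b \<Longrightarrow> DERIV g x :> g' x"
    and "\<And>x. a < ereal x \<Longrightarrow> ereal x < b \<Longrightarrow> isCont f (g x)"
    and "\<And>x. a < ereal x \<Longrightarrow> ereal x < b \<Longrightarrow> isCont g' x"
    and "\<And>x. a \<le> ereal x \<Longrightarrow> ereal x \<le> b \<Longrightarrow> 0 \<le> g' x"
    and "((ereal \<circ> g \<circ> real_of_ereal) \<longlongrightarrow> A) (at_right a)"
    and "((ereal \<circ> g \<circ> real_of_ereal) \<longlongrightarrow> B) (at_left b)"
    and "set_integrable lborel (einterval a b) (\<lambda>x. f (g x) * g' x)"
  shows "(\<integral>\<^sup>+x\<in>einterval A B. ennreal (f x) \<partial>lborel) = ennreal (LBINT x=a..b. f (g x) * g' x)"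
proof -
  note S = interval_integral_substitution_nonneg[OF assms(1,4-6) f_nonneg assms(7-10)]
  show ?thesis
    using set_nn_integral_eq_set_lebesgue_integral[OF S(1) f_nonneg] S(2) \<open>A \<le> B\<close>
    by (simp add: interval_lebesgue_integral_def)
qed

lemma nn_integral_Ioi_reflect:
  fixes F :: "real \<Rightarrow> ennreal"
  assumes [measurable]: "F \<in> borel_measurable borel"
  shows "(\<integral>\<^sup>+s\<in>{u<..}. F s \<partial>lborel) = (\<integral>\<^sup>+z\<in>{..<- u}. F (- z) \<partial>lborel)"
proof -
  have "(\<integral>\<^sup>+s\<in>{u<..}. F s \<partial>lborel) = (\<integral>\<^sup>+z. F (- z) * indicator {u<..} (- z) \<partial>lborel)"
    using nn_integral_real_affine[of "\<lambda>s. F s * indicator {u<..} s" "-1" 0] by simp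
  also have "\<dots> = (\<integral>\<^sup>+z\<in>{..<- u}. F (- z) \<partial>lborel)"
    by (intro nn_integral_cong) (auto simp: indicator_def)
  finally show ?thesis .
qed

lemma set_integrable_powr_Ioo:
  fixes a T :: real
  assumes "a > 0" "T > 0"
  shows "set_integrable lborel {0<..<T} (\<lambda>t. t powr (a - 1))"
proof -
  have "((\<lambda>t. t powr a) \<longlongrightarrow> 0) (at_right (0::real))"
    using assms by (intro tendsto_zero_powrI tendsto_ident_at tendsto_const)
      (auto simp: eventually_at_right_less eventually_mono[OF eventually_at_right_less])
  then have "(((\<lambda>t. t powr a / a) \<circ> real_of_ereal) \<longlongrightarrow> 0) (at_right (ereal 0))"
    unfolding ereal_tendsto_simps1 using tendsto_divide_zero by blast
  moreover have "(((\<lambda>t. t powr a / a) \<circ> real_of_ereal) \<longlongrightarrow> T powr a / a) (at_left (ereal T))"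
    unfolding ereal_tendsto_simps1 using assms by (intro tendsto_intros tendsto_ident_at) auto
  ultimately have "set_integrable lborel (einterval (ereal 0) (ereal T)) (\<lambda>t. t powr (a - 1))"
    using assms
    by (intro interval_integral_FTC_nonneg(1)[where F="\<lambda>t. t powr a / a" and A=0 and B="T powr a / a"])
      (auto intro!: derivative_eq_intros continuous_intros)
  then show ?thesis
    by simp
qed

lemma set_integrable_incomplete_beta0:
  fixes a T :: real
  assumes "a > 0" "0 < T" "T < 1"
  shows "set_integrable lborel {0<..<T} (\<lambda>t. t powr (a - 1) / (1 - t))"
proof (rule set_integrable_bound[where f="\<lambda>t. t powr (a - 1) / (1 - T)"])
  show "set_integrable lborel {0<..<T} (\<lambda>t. t powr (a - 1) / (1 - T))"
    using set_integrable_powr_Ioo[OF assms(1,2)] by (rule set_integrable_divide)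
  show "set_borel_measurable lborel {0<..<T} (\<lambda>t. t powr (a - 1) / (1 - t))"
    unfolding set_borel_measurable_def by measurable
  show "AE t in lborel. t \<in> {0<..<T} \<longrightarrow>
      norm (t powr (a - 1) / (1 - t)) \<le> norm (t powr (a - 1) / (1 - T))"
    using assms by (intro AE_I2) (auto intro!: divide_left_mono)
qed

lemma set_integrable_exp_div_Ioi:
  fixes c :: real
  assumes "c > 0"
  shows "set_integrable lborel {c<..} (\<lambda>t. exp (- t) / t)"
proof (rule set_integrable_bound[where f="\<lambda>t. exp (- t) / c"])
  have "((\<lambda>t::real. - exp (- t)) \<longlongrightarrow> 0) at_top"
    using tendsto_minus[OF filterlim_compose[OF exp_at_bot filterlim_uminus_at_bot_at_top]] by simp
  then have "set_integrable lborel (einterval (ereal c) \<infinity>) (\<lambda>t. exp (- t))"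
    by (intro interval_integral_FTC_nonneg(1)[where F="\<lambda>t. - exp (- t)" and A="- exp (- c)" and B=0])
      (auto intro!: derivative_eq_intros tendsto_intros simp: ereal_tendsto_simps)
  then show "set_integrable lborel {c<..} (\<lambda>t. exp (- t) / c)"
    by (simp add: set_integrable_divide)
  show "set_borel_measurable lborel {c<..} (\<lambda>t. exp (- t) / t)"
    unfolding set_borel_measurable_def by measurable
  show "AE t in lborel. t \<in> {c<..} \<longrightarrow> norm (exp (- t) / t) \<le> norm (exp (- t) / c)"
    using assms by (intro AE_I2) (auto intro!: divide_left_mono)
qed

lemma nn_integral_excess_eq_nn_integral_tail:
  fixes f :: "real \<Rightarrow> ennreal"
  assumes [measurable]: "f \<in> borel_measurable borel"
  shows "(\<integral>\<^sup>+y. f y * ennreal ((y - u) * indicator {u<..} y) \<partial>lborel)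
       = (\<integral>\<^sup>+s\<in>{u<..}. (\<integral>\<^sup>+y\<in>{s<..}. f y \<partial>lborel) \<partial>lborel)"
proof -
  have length: "ennreal ((y - u) * indicator {u<..} y) = (\<integral>\<^sup>+s. indicator {u<..<y} s \<partial>lborel)"
    for y :: real
    by (cases "u < y") auto
  have "(\<integral>\<^sup>+y. f y * ennreal ((y - u) * indicator {u<..} y) \<partial>lborel)
      = (\<integral>\<^sup>+y. (\<integral>\<^sup>+s. f y * indicator {u<..<y} s \<partial>lborel) \<partial>lborel)"
    unfolding length by (simp add: nn_integral_cmult)
  also have "\<dots> = (\<integral>\<^sup>+s. (\<integral>\<^sup>+y. f y * indicator {u<..<y} s \<partial>lborel) \<partial>lborel)"
  proof (rule lborel_pair.Fubini')
    have "case_prod (\<lambda>s y. f y * indicator {u<..<y} s)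
        = (\<lambda>p. f (snd p) * (if u < fst p \<and> fst p < snd p then 1 else 0))"
      by (auto simp: indicator_def fun_eq_iff)
    then show "case_prod (\<lambda>s y. f y * indicator {u<..<y} s) \<in> borel_measurable (lborel \<Otimes>\<^sub>M lborel)"
      by simp
  qed
  also have "\<dots> = (\<integral>\<^sup>+s\<in>{u<..}. (\<integral>\<^sup>+y\<in>{s<..}. f y \<partial>lborel) \<partial>lborel)"
  proof (rule nn_integral_cong)
    fix s :: real
    have "(\<integral>\<^sup>+y. f y * indicator {u<..<y} s \<partial>lborel)
        = (\<integral>\<^sup>+y. indicator {u<..} s * (f y * indicator {s<..} y) \<partial>lborel)"
      by (intro nn_integral_cong) (auto simp: indicator_def)
    then show "(\<integral>\<^sup>+y. f y * indicator {u<..<y} s \<partial>lborel)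
        = (\<integral>\<^sup>+y\<in>{s<..}. f y \<partial>lborel) * indicator {u<..} s"
      by (simp add: nn_integral_cmult mult.commute)
  qed
  finally show ?thesis .
qed

lemma distributed_integrable_integral_eq:
  fixes g f :: "real \<Rightarrow> real"
  assumes "distributed M lborel Y (\<lambda>y. ennreal (f y))"
    and "g \<in> borel_measurable borel" "\<And>y. 0 \<le> g y" "0 \<le> r"
    and "(\<integral>\<^sup>+y. ennreal (f y) * ennreal (g y) \<partial>lborel) = ennreal r"
  shows "integrable M (\<lambda>\<omega>. g (Y \<omega>))" "(\<integral>\<omega>. g (Y \<omega>) \<partial>M) = r"
proof -
  have "Y \<in> borel_measurable M"
    using distributed_measurable[OF assms(1)] by simp
  moreover have "(\<integral>\<^sup>+\<omega>. ennreal (g (Y \<omega>)) \<partial>M) = ennreal r"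
    using distributed_nn_integral[OF assms(1), of "\<lambda>y. ennreal (g y)"] assms(2,5) by simp
  ultimately show "integrable M (\<lambda>\<omega>. g (Y \<omega>))" "(\<integral>\<omega>. g (Y \<omega>) \<partial>M) = r"
    using assms(2-4) by (subst (asm) nn_integral_eq_integrable; auto)+
qed

lemma (in prob_space) cond_tail_exp_eq_add_mean_excess:
  assumes [measurable]: "Y \<in> borel_measurable M"
    and "integrable M (\<lambda>\<omega>. (Y \<omega> - v) * indicator {v<..} (Y \<omega>))"
    and "prob {\<omega> \<in> space M. v < Y \<omega>} > 0"
  shows "integrable M (\<lambda>\<omega>. Y \<omega> * indicator {v<..} (Y \<omega>))"
    and "cond_tail_exp M Y v = v + mean_excess M Y v"
proof -
  have split: "Y \<omega> * indicator {v<..} (Y \<omega>)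
      = (Y \<omega> - v) * indicator {v<..} (Y \<omega>) + v * indicator {v<..} (Y \<omega>)" for \<omega>
    by (simp add: algebra_simps)
  have tail_set: "{\<omega> \<in> space M. v < Y \<omega>} \<in> sets M"
    by measurable
  have "(\<integral>\<omega>. indicator {v<..} (Y \<omega>) \<partial>M) = (\<integral>\<omega>. indicator {\<omega> \<in> space M. v < Y \<omega>} \<omega> \<partial>M :: real)"
    by (intro Bochner_Integration.integral_cong) (auto simp: indicator_def)
  also have "\<dots> = prob {\<omega> \<in> space M. v < Y \<omega>}"
    using tail_set by simp
  finally have tail_prob: "(\<integral>\<omega>. indicator {v<..} (Y \<omega>) \<partial>M) = prob {\<omega> \<in> space M. v < Y \<omega>}" .
  have tail_ind: "integrable M (\<lambda>\<omega>. indicator {v<..} (Y \<omega>) :: real)"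
    by (intro integrable_const_bound[where B=1]) (auto simp: indicator_def)
  show "integrable M (\<lambda>\<omega>. Y \<omega> * indicator {v<..} (Y \<omega>))"
    unfolding split using assms(2) tail_ind by auto
  have "(\<integral>\<omega>. Y \<omega> * indicator {v<..} (Y \<omega>) \<partial>M)
      = (\<integral>\<omega>. (Y \<omega> - v) * indicator {v<..} (Y \<omega>) \<partial>M) + v * prob {\<omega> \<in> space M. v < Y \<omega>}"
    unfolding split tail_prob[symmetric]
    using assms(2) tail_ind by (subst Bochner_Integration.integral_add) auto
  then show "cond_tail_exp M Y v = v + mean_excess M Y v"
    unfolding cond_tail_exp_def mean_excess_def using assms(3)
    by (simp add: field_simps)
qed

section \<open>Survival function of the exGPD\<close>

lemma borel_measurable_exgpd_density [measurable]: "exgpd_density \<sigma> \<xi> \<in> borel_measurable borel"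
  unfolding exgpd_density_def by measurable

lemma borel_measurable_exgpd_sf [measurable]: "exgpd_sf \<sigma> \<xi> \<in> borel_measurable borel"
  unfolding exgpd_sf_def exgpd_cdf_def by measurable

lemma exgpd_base_pos_iff:
  fixes \<sigma> \<xi> y :: real
  assumes "\<sigma> > 0" "\<xi> < 0"
  shows "0 < 1 + \<xi> * exp y / \<sigma> \<longleftrightarrow> y < ln (- \<sigma> / \<xi>)"
proof -
  have "0 < - \<sigma> / \<xi>"
    using assms by (simp add: divide_pos_neg)
  then have "0 < 1 + \<xi> * exp y / \<sigma> \<longleftrightarrow> exp y < exp (ln (- \<sigma> / \<xi>))"
    using assms by (auto simp: field_simps)
  then show ?thesis by simp
qed

lemma exgpd_sf_nonneg: "0 \<le> exgpd_sf \<sigma> \<xi> y"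
  by (simp add: exgpd_sf_def exgpd_cdf_def)

lemma exgpd_sf_pos:
  assumes "\<sigma> > 0" "\<xi> < 0 \<Longrightarrow> u < ln (- \<sigma> / \<xi>)"
  shows "0 < exgpd_sf \<sigma> \<xi> u"
proof -
  have "\<xi> \<noteq> 0 \<Longrightarrow> 0 < 1 + \<xi> * exp u / \<sigma>"
    using assms exgpd_base_pos_iff[OF assms(1)] by (cases "\<xi> < 0") (auto intro: add_pos_pos)
  then show ?thesis by (auto simp: exgpd_sf_def exgpd_cdf_def)
qed

lemma nn_integral_exgpd_density_Ioi_pos:
  assumes "\<sigma> > 0" "\<xi> > 0"
  shows "(\<integral>\<^sup>+y\<in>{s<..}. ennreal (exgpd_density \<sigma> \<xi> y) \<partial>lborel) = ennreal (exgpd_sf \<sigma> \<xi> s)"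
proof -
  have base: "0 < 1 + \<xi> * exp y / \<sigma>" for y
    using assms by (simp add: add_pos_nonneg)
  have base_cleared: "\<sigma> + \<xi> * exp y \<noteq> 0" for y
    using assms by (simp add: add_pos_nonneg less_imp_neq[symmetric])
  have density: "exgpd_density \<sigma> \<xi> y = exp y / \<sigma> * (1 + \<xi> * exp y / \<sigma>) powr (- 1 / \<xi> - 1)" for y
    using assms base[of y] by (simp add: exgpd_density_def)
  have sf: "exgpd_sf \<sigma> \<xi> s = (1 + \<xi> * exp s / \<sigma>) powr (- 1 / \<xi>)"
    using assms base[of s] by (simp add: exgpd_sf_def exgpd_cdf_def)
  let ?F = "\<lambda>y. - ((1 + \<xi> * exp y / \<sigma>) powr (- 1 / \<xi>))"
  have "filterlim (\<lambda>y. 1 + \<xi> / \<sigma> * exp y) at_top at_top"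
    using assms by (intro filterlim_tendsto_add_at_top[OF tendsto_const]
        filterlim_tendsto_pos_mult_at_top[OF tendsto_const] exp_at_top) auto
  then have "((\<lambda>y. (1 + \<xi> * exp y / \<sigma>) powr (- 1 / \<xi>)) \<longlongrightarrow> 0) at_top"
    using assms by (intro tendsto_neg_powr) auto
  then have "(?F \<longlongrightarrow> 0) at_top"
    using tendsto_minus by fastforce
  then have "(\<integral>\<^sup>+y\<in>einterval (ereal s) \<infinity>. ennreal (exgpd_density \<sigma> \<xi> y) \<partial>lborel) = ennreal (0 - ?F s)"
    unfolding density using assms base
    by (intro nn_integral_einterval_FTC)
      (auto intro!: derivative_eq_intros continuous_intros tendsto_intros
        simp: ereal_tendsto_simps field_simps base_cleared)
  then show ?thesis
    by (simp add: sf)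
qed

lemma nn_integral_exgpd_density_Ioi_zero:
  assumes "\<sigma> > 0"
  shows "(\<integral>\<^sup>+y\<in>{s<..}. ennreal (exgpd_density \<sigma> 0 y) \<partial>lborel) = ennreal (exgpd_sf \<sigma> 0 s)"
proof -
  have density: "exgpd_density \<sigma> 0 y = exp y * exp (- exp y / \<sigma>) / \<sigma>" for y
    by (simp add: exgpd_density_def exp_add[symmetric])
  let ?F = "\<lambda>y. - exp (- exp y / \<sigma>)"
  have "filterlim (\<lambda>y. - (inverse \<sigma> * exp y)) at_bot at_top"
    using assms by (intro filterlim_uminus_at_top[THEN iffD1]
        filterlim_tendsto_pos_mult_at_top[OF tendsto_const] exp_at_top) auto
  then have "((\<lambda>y. exp (- exp y / \<sigma>)) \<longlongrightarrow> 0) at_top"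
    using filterlim_compose[OF exp_at_bot] by (simp add: field_simps)
  then have "(?F \<longlongrightarrow> 0) at_top"
    using tendsto_minus by fastforce
  then have "(\<integral>\<^sup>+y\<in>einterval (ereal s) \<infinity>. ennreal (exgpd_density \<sigma> 0 y) \<partial>lborel) = ennreal (0 - ?F s)"
    unfolding density using assms
    by (intro nn_integral_einterval_FTC)
      (auto intro!: derivative_eq_intros continuous_intros tendsto_intros
        simp: ereal_tendsto_simps field_simps)
  then show ?thesis
    by (simp add: exgpd_sf_def exgpd_cdf_def)
qed

lemma nn_integral_exgpd_density_Ioi_neg:
  assumes "\<sigma> > 0" "\<xi> < 0"
  shows "(\<integral>\<^sup>+y\<in>{s<..}. ennreal (exgpd_density \<sigma> \<xi> y) \<partial>lborel) = ennreal (exgpd_sf \<sigma> \<xi> s)"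
proof -
  define m where "m = ln (- \<sigma> / \<xi>)"
  have support: "0 < 1 + \<xi> * exp y / \<sigma> \<longleftrightarrow> y < m" for y
    unfolding m_def by (rule exgpd_base_pos_iff[OF assms])
  show ?thesis
  proof (cases "s < m")
    case False
    then have "(\<integral>\<^sup>+y\<in>{s<..}. ennreal (exgpd_density \<sigma> \<xi> y) \<partial>lborel) = (\<integral>\<^sup>+y. 0 \<partial>(lborel :: real measure))"
      using support assms by (intro nn_integral_cong) (auto simp: exgpd_density_def indicator_def)
    moreover have "exgpd_sf \<sigma> \<xi> s = 0"
      using False support[of s] assms by (simp add: exgpd_sf_def exgpd_cdf_def)
    ultimately show ?thesis
      by simp
  next
    case True
    let ?d = "\<lambda>y. exp y / \<sigma> * (1 + \<xi> * exp y / \<sigma>) powr (- 1 / \<xi> - 1)"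
    let ?F = "\<lambda>y. - ((1 + \<xi> * exp y / \<sigma>) powr (- 1 / \<xi>))"
    have D: "(?F has_real_derivative ?d y) (at y)" if "y < m" for y
      using support[of y] that assms by (auto intro!: derivative_eq_intros simp: field_simps)
    have C: "isCont ?d y" if "y < m" for y
      using support[of y] that assms by (auto intro!: continuous_intros)
    have "((\<lambda>y. 1 + \<xi> * exp y / \<sigma>) \<longlongrightarrow> 1 + \<xi> * exp m / \<sigma>) (at_left m)"
      using assms by (intro tendsto_intros) auto
    moreover have "1 + \<xi> * exp m / \<sigma> = 0"
      using assms by (simp add: m_def divide_pos_neg)
    ultimately have base_to_zero: "((\<lambda>y. 1 + \<xi> * exp y / \<sigma>) \<longlongrightarrow> 0) (at_left m)"
      by simp
    have "\<forall>\<^sub>F y in at_left m. 0 \<le> 1 + \<xi> * exp y / \<sigma>"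
      by (rule eventually_mono[OF eventually_at_left_real[of "m - 1" m]])
        (simp, metis greaterThanLessThan_iff less_imp_le support)
    from tendsto_zero_powrI[OF base_to_zero tendsto_const this]
    have "((\<lambda>y. (1 + \<xi> * exp y / \<sigma>) powr (- 1 / \<xi>)) \<longlongrightarrow> 0) (at_left m)"
      using assms by (simp add: divide_neg_neg)
    then have "(?F \<longlongrightarrow> 0) (at_left m)"
      using tendsto_minus by fastforce
    have "(\<integral>\<^sup>+y\<in>{s<..}. ennreal (exgpd_density \<sigma> \<xi> y) \<partial>lborel)
        = (\<integral>\<^sup>+y\<in>einterval (ereal s) (ereal m). ennreal (?d y) \<partial>lborel)"
      using support assms by (intro nn_integral_cong) (auto simp: exgpd_density_def indicator_def)
    also have "\<dots> = ennreal (0 - ?F s)"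
    proof (rule nn_integral_einterval_FTC)
      show "((?F \<circ> real_of_ereal) \<longlongrightarrow> ?F s) (at_right (ereal s))"
        unfolding ereal_tendsto_simps using True support[of s] assms
        by (intro tendsto_intros) auto
      show "((?F \<circ> real_of_ereal) \<longlongrightarrow> 0) (at_left (ereal m))"
        unfolding ereal_tendsto_simps by fact
    qed (use True D C assms in auto)
    finally show ?thesis
      using True support[of s] assms by (simp add: exgpd_sf_def exgpd_cdf_def)
  qed
qed

lemma nn_integral_exgpd_density_Ioi:
  assumes "\<sigma> > 0"
  shows "(\<integral>\<^sup>+y\<in>{s<..}. ennreal (exgpd_density \<sigma> \<xi> y) \<partial>lborel) = ennreal (exgpd_sf \<sigma> \<xi> s)"
  using nn_integral_exgpd_density_Ioi_pos[OF assms] nn_integral_exgpd_density_Ioi_zero[OF assms]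
    nn_integral_exgpd_density_Ioi_neg[OF assms]
  by (cases \<xi> "0::real" rule: linorder_cases) auto

section \<open>Stop-loss transform of the exGPD\<close>

text \<open>The closed form of E[max (Y - u) 0], which equals the integral of the survival function over (u, \<infinity>).\<close>
definition exgpd_stop_loss :: "real \<Rightarrow> real \<Rightarrow> real \<Rightarrow> real" where
  "exgpd_stop_loss \<sigma> \<xi> u =
     (if \<xi> > 0 then inc_beta0 (inverse (1 + \<xi> * exp u / \<sigma>)) (1 / \<xi>)
      else if \<xi> < 0 then inc_beta0 (1 + \<xi> * exp u / \<sigma>) (1 - 1 / \<xi>)
      else upper_gamma 0 (exp u / \<sigma>))"

lemma nn_integral_exgpd_sf_Ioi_zero:
  assumes "\<sigma> > 0"
  shows "(\<integral>\<^sup>+s\<in>{u<..}. ennreal (exgpd_sf \<sigma> 0 s) \<partial>lborel) = ennreal (upper_gamma 0 (exp u / \<sigma>))"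
proof -
  define c where "c = exp u / \<sigma>"
  have "c > 0"
    unfolding c_def using assms by simp
  let ?f = "\<lambda>s. exp (- exp s / \<sigma>)"
  let ?g = "\<lambda>t. ln (\<sigma> * t)"
  have fg: "?f (?g t) * (1 / t) = exp (- t) / t" if "t > 0" for t
    using that assms by simp
  have "(\<integral>\<^sup>+s\<in>einterval (ereal u) \<infinity>. ennreal (?f s) \<partial>lborel)
      = ennreal (LBINT t=ereal c..\<infinity>. ?f (?g t) * (1 / t))"
  proof (rule nn_integral_einterval_substitution)
    show "((ereal \<circ> ?g \<circ> real_of_ereal) \<longlongrightarrow> ereal u) (at_right (ereal c))"
      unfolding ereal_tendsto_simps1 ereal_tendsto_simps2 o_def
      using \<open>c > 0\<close> assms by (auto intro!: tendsto_eq_intros simp: c_def)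
    have "filterlim ?g at_top at_top"
      using assms by (intro filterlim_compose[OF ln_at_top]
          filterlim_tendsto_pos_mult_at_top[OF tendsto_const _ filterlim_ident]) auto
    then show "((ereal \<circ> ?g \<circ> real_of_ereal) \<longlongrightarrow> \<infinity>) (at_left \<infinity>)"
      unfolding ereal_tendsto_simps1 ereal_tendsto_simps2 .
    show "set_integrable lborel (einterval (ereal c) \<infinity>) (\<lambda>t. ?f (?g t) * (1 / t))"
      using set_integrable_exp_div_Ioi[OF \<open>c > 0\<close>] \<open>c > 0\<close>
      by (subst set_integrable_cong[OF refl _ fg]) auto
  qed (use \<open>c > 0\<close> assms in \<open>auto intro!: derivative_eq_intros continuous_intros\<close>)
  also have "(LBINT t=ereal c..\<infinity>. ?f (?g t) * (1 / t)) = upper_gamma 0 c"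
    unfolding upper_gamma_def interval_lebesgue_integral_def
    using \<open>c > 0\<close> fg by (auto intro!: set_lebesgue_integral_cong simp: powr_minus divide_inverse)
  finally show ?thesis
    by (simp add: exgpd_sf_def exgpd_cdf_def c_def)
qed

lemma nn_integral_exgpd_sf_Ioi_pos:
  assumes "\<sigma> > 0" "\<xi> > 0"
  shows "(\<integral>\<^sup>+s\<in>{u<..}. ennreal (exgpd_sf \<sigma> \<xi> s) \<partial>lborel)
    = ennreal (inc_beta0 (inverse (1 + \<xi> * exp u / \<sigma>)) (1 / \<xi>))"
proof -
  define T where "T = inverse (1 + \<xi> * exp u / \<sigma>)"
  have "0 < \<xi> * exp u / \<sigma>"
    using assms by simp
  then have "0 < T" "T < 1"
    unfolding T_def by (auto simp: inverse_less_1_iff)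
  txt \<open>The substitution rule wants an increasing change of variables, so we integrate in z = -s;
    ?g inverts t = 1 / (1 + \<xi> e^(-z) / \<sigma>).\<close>
  let ?f = "\<lambda>z. (1 + \<xi> * exp (- z) / \<sigma>) powr (- 1 / \<xi>)"
  let ?g = "\<lambda>t. ln (\<xi> / \<sigma>) - ln (1 - t) + ln t"
  let ?g' = "\<lambda>t. 1 / t + 1 / (1 - t)"
  have base: "1 + \<xi> * exp (- ?g t) / \<sigma> = inverse t" if "0 < t" "t < 1" for t
    using that assms by (simp add: exp_add exp_diff exp_minus field_simps)
  have fg: "?f (?g t) * ?g' t = t powr (1 / \<xi> - 1) / (1 - t)" if "0 < t" "t < 1" for t
  proof -
    have "?f (?g t) = t powr (1 / \<xi>)"
      unfolding base[OF that] using that by (simp add: powr_def ln_inverse)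
    then show ?thesis
      using that by (simp add: powr_diff field_simps)
  qed
  have "T / (1 - T) = \<sigma> / (\<xi> * exp u)"
    using assms unfolding T_def by (simp add: field_simps add_pos_nonneg less_imp_neq[symmetric])
  have "exp (?g T) = \<xi> / \<sigma> * (T / (1 - T))"
    using \<open>0 < T\<close> \<open>T < 1\<close> assms by (simp add: exp_add exp_diff)
  also have "\<dots> = exp (- u)"
    unfolding \<open>T / (1 - T) = \<sigma> / (\<xi> * exp u)\<close> using assms by (simp add: exp_minus field_simps)
  finally have "exp (?g T) = exp (- u)" .
  then have "?g T = - u"
    by simp
  have "(\<integral>\<^sup>+z\<in>einterval (- \<infinity>) (ereal (- u)). ennreal (?f z) \<partial>lborel)
      = ennreal (LBINT t=ereal 0..ereal T. ?f (?g t) * ?g' t)"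
  proof (rule nn_integral_einterval_substitution)
    have "((\<lambda>t. ln (\<xi> / \<sigma>) - ln (1 - t)) \<longlongrightarrow> ln (\<xi> / \<sigma>) - ln (1 - 0)) (at_right 0)"
      by (intro tendsto_intros) auto
    then have "filterlim ?g at_bot (at_right 0)"
      by (subst filterlim_tendsto_add_at_bot_iff) (auto intro: ln_at_0)
    then show "((ereal \<circ> ?g \<circ> real_of_ereal) \<longlongrightarrow> - \<infinity>) (at_right (ereal 0))"
      unfolding ereal_tendsto_simps1 ereal_tendsto_simps2 .
    show "((ereal \<circ> ?g \<circ> real_of_ereal) \<longlongrightarrow> ereal (- u)) (at_left (ereal T))"
      unfolding ereal_tendsto_simps1 ereal_tendsto_simps2 \<open>?g T = - u\<close>[symmetric]
      using \<open>0 < T\<close> \<open>T < 1\<close> by (intro tendsto_intros) auto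
    show "set_integrable lborel (einterval (ereal 0) (ereal T)) (\<lambda>t. ?f (?g t) * ?g' t)"
      using set_integrable_incomplete_beta0[of "1 / \<xi>" T] assms \<open>0 < T\<close> \<open>T < 1\<close>
      by (subst set_integrable_cong[OF refl _ fg]) auto
    show "isCont ?f (?g t)" for t
      using assms by (intro continuous_intros) (auto simp: add_pos_nonneg less_imp_neq[symmetric])
  qed (use \<open>0 < T\<close> \<open>T < 1\<close> assms in \<open>auto intro!: derivative_eq_intros continuous_intros\<close>)
  also have "(LBINT t=ereal 0..ereal T. ?f (?g t) * ?g' t) = inc_beta0 T (1 / \<xi>)"
    unfolding inc_beta0_def interval_lebesgue_integral_def
    using \<open>0 < T\<close> \<open>T < 1\<close> fg by (auto intro!: set_lebesgue_integral_cong)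
  finally show ?thesis
    using assms
    by (simp add: nn_integral_Ioi_reflect T_def exgpd_sf_def exgpd_cdf_def add_pos_nonneg)
qed

lemma nn_integral_exgpd_sf_Ioi_neg:
  assumes "\<sigma> > 0" "\<xi> < 0" "u < ln (- \<sigma> / \<xi>)"
  shows "(\<integral>\<^sup>+s\<in>{u<..}. ennreal (exgpd_sf \<sigma> \<xi> s) \<partial>lborel)
    = ennreal (inc_beta0 (1 + \<xi> * exp u / \<sigma>) (1 - 1 / \<xi>))"
proof -
  define m where "m = ln (- \<sigma> / \<xi>)"
  define T where "T = 1 + \<xi> * exp u / \<sigma>"
  have support: "0 < 1 + \<xi> * exp y / \<sigma> \<longleftrightarrow> y < m" for y
    unfolding m_def by (rule exgpd_base_pos_iff[OF assms(1,2)])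
  have "0 < T"
    unfolding T_def using support assms(3) m_def by simp
  have "T < 1"
    unfolding T_def using assms by (simp add: mult_neg_pos divide_neg_pos)
  have "exp m = - \<sigma> / \<xi>"
    unfolding m_def using assms by (simp add: divide_pos_neg)
  txt \<open>As for \<xi> > 0 we integrate in z = -s; ?g inverts t = 1 + \<xi> e^(-z) / \<sigma>.\<close>
  let ?f = "\<lambda>z. (1 + \<xi> * exp (- z) / \<sigma>) powr (- 1 / \<xi>)"
  let ?g = "\<lambda>t. - m - ln (1 - t)"
  let ?g' = "\<lambda>t. 1 / (1 - t)"
  have base: "1 + \<xi> * exp (- ?g t) / \<sigma> = t" if "t < 1" for t
  proof -
    have "exp (- ?g t) = exp m * (1 - t)"
      using that by (simp add: exp_add)
    then show ?thesis
      unfolding \<open>exp m = - \<sigma> / \<xi>\<close> using assms by (simp add: field_simps)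
  qed
  have fg: "?f (?g t) * ?g' t = t powr ((1 - 1 / \<xi>) - 1) / (1 - t)" if "t < 1" for t
    unfolding base[OF that] by simp
  have "?g T = - u"
    using base[OF \<open>T < 1\<close>] assms unfolding T_def by (simp add: field_simps)
  have "(\<integral>\<^sup>+z\<in>einterval (ereal (- m)) (ereal (- u)). ennreal (?f z) \<partial>lborel)
      = ennreal (LBINT t=ereal 0..ereal T. ?f (?g t) * ?g' t)"
  proof (rule nn_integral_einterval_substitution)
    have "(?g \<longlongrightarrow> ?g 0) (at_right 0)"
      by (intro tendsto_intros) auto
    then show "((ereal \<circ> ?g \<circ> real_of_ereal) \<longlongrightarrow> ereal (- m)) (at_right (ereal 0))"
      unfolding ereal_tendsto_simps1 ereal_tendsto_simps2 by simp
    show "((ereal \<circ> ?g \<circ> real_of_ereal) \<longlongrightarrow> ereal (- u)) (at_left (ereal T))"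
      unfolding ereal_tendsto_simps1 ereal_tendsto_simps2 \<open>?g T = - u\<close>[symmetric]
      using \<open>T < 1\<close> by (intro tendsto_intros) auto
    show "set_integrable lborel (einterval (ereal 0) (ereal T)) (\<lambda>t. ?f (?g t) * ?g' t)"
      using set_integrable_incomplete_beta0[of "1 - 1 / \<xi>" T] assms \<open>0 < T\<close> \<open>T < 1\<close>
      by (subst set_integrable_cong[OF refl _ fg]) (auto simp: divide_neg_neg)
    show "isCont ?f (?g t)" if "ereal 0 < ereal t" "ereal t < ereal T" for t
      using base[of t] that \<open>T < 1\<close> assms by (intro continuous_intros) auto
  qed (use \<open>0 < T\<close> \<open>T < 1\<close> assms m_def in \<open>auto intro!: derivative_eq_intros continuous_intros\<close>)
  also have "(LBINT t=ereal 0..ereal T. ?f (?g t) * ?g' t) = inc_beta0 T (1 - 1 / \<xi>)"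
    unfolding inc_beta0_def interval_lebesgue_integral_def
    using \<open>0 < T\<close> \<open>T < 1\<close> fg by (auto intro!: set_lebesgue_integral_cong)
  also have "(\<integral>\<^sup>+z\<in>einterval (ereal (- m)) (ereal (- u)). ennreal (?f z) \<partial>lborel)
      = (\<integral>\<^sup>+z\<in>{..<- u}. ennreal (exgpd_sf \<sigma> \<xi> (- z)) \<partial>lborel)"
    using support assms by (intro nn_integral_cong) (auto simp: exgpd_sf_def exgpd_cdf_def indicator_def)
  finally show ?thesis
    by (simp add: nn_integral_Ioi_reflect T_def)
qed

lemma nn_integral_exgpd_sf_Ioi:
  assumes "\<sigma> > 0" "\<xi> < 0 \<Longrightarrow> u < ln (- \<sigma> / \<xi>)"
  shows "(\<integral>\<^sup>+s\<in>{u<..}. ennreal (exgpd_sf \<sigma> \<xi> s) \<partial>lborel) = ennreal (exgpd_stop_loss \<sigma> \<xi> u)"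
  using nn_integral_exgpd_sf_Ioi_pos[OF assms(1)] nn_integral_exgpd_sf_Ioi_zero[OF assms(1)]
    nn_integral_exgpd_sf_Ioi_neg[OF assms(1) _ assms(2)]
  unfolding exgpd_stop_loss_def by (cases \<xi> "0::real" rule: linorder_cases) auto

lemma inc_beta0_nonneg: "0 < x \<Longrightarrow> x < 1 \<Longrightarrow> 0 \<le> inc_beta0 x a"
  unfolding inc_beta0_def set_lebesgue_integral_def
  by (intro Bochner_Integration.integral_nonneg) (auto simp: indicator_def)

lemma upper_gamma_nonneg: "0 \<le> upper_gamma s x"
  unfolding upper_gamma_def set_lebesgue_integral_def
  by (intro Bochner_Integration.integral_nonneg) (auto simp: indicator_def)

lemma exgpd_stop_loss_nonneg:
  assumes "\<sigma> > 0" "\<xi> < 0 \<Longrightarrow> u < ln (- \<sigma> / \<xi>)"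
  shows "0 \<le> exgpd_stop_loss \<sigma> \<xi> u"
proof -
  have "0 < 1 + \<xi> * exp u / \<sigma>" if "\<xi> < 0"
    using exgpd_base_pos_iff[OF assms(1) that] assms(2)[OF that] by simp
  moreover have "\<xi> * exp u / \<sigma> < 0" if "\<xi> < 0"
    using that assms(1) by (simp add: mult_neg_pos divide_neg_pos)
  moreover have "0 < \<xi> * exp u / \<sigma>" if "\<xi> > 0"
    using that assms(1) by simp
  ultimately show ?thesis
    unfolding exgpd_stop_loss_def
    by (auto intro!: inc_beta0_nonneg upper_gamma_nonneg simp: inverse_less_1_iff)
qed

lemma exgpd_stop_loss_div_sf:
  "exgpd_stop_loss \<sigma> \<xi> u / exgpd_sf \<sigma> \<xi> u =
     (if \<xi> > 0 then inverse (exgpd_sf \<sigma> \<xi> u) * inc_beta0 (inverse (1 + \<xi> * exp u / \<sigma>)) (1 / \<xi>)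
      else if \<xi> < 0 then inverse (exgpd_sf \<sigma> \<xi> u) * inc_beta0 (1 + \<xi> * exp u / \<sigma>) (1 - 1 / \<xi>)
      else exp (exp u / \<sigma>) * upper_gamma 0 (exp u / \<sigma>))"
  by (simp add: exgpd_stop_loss_def exgpd_sf_def exgpd_cdf_def exp_minus divide_inverse mult.commute)

section \<open>Quantiles and tail moments\<close>

lemma exgpd_quantile_base:
  assumes "\<xi> \<noteq> 0" "\<sigma> > 0" "0 < p" "p < 1"
  shows "1 + \<xi> * exp (exgpd_quantile \<sigma> \<xi> p) / \<sigma> = (1 - p) powr (- \<xi>)"
proof -
  have "ln (1 - p) < 0"
    using assms by simp
  then have "0 < \<xi> * ((1 - p) powr (- \<xi>) - 1)"
    using assms by (auto simp: powr_def zero_less_mult_iff mult_less_0_iff)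
  then have "0 < \<sigma> / \<xi> * ((1 - p) powr (- \<xi>) - 1)"
    using assms by (auto simp: zero_less_mult_iff zero_less_divide_iff mult_less_0_iff)
  then show ?thesis
    using assms by (simp add: exgpd_quantile_def field_simps)
qed

lemma exgpd_cdf_quantile:
  assumes "\<sigma> > 0" "0 < p" "p < 1"
  shows "exgpd_cdf \<sigma> \<xi> (exgpd_quantile \<sigma> \<xi> p) = p"
proof (cases "\<xi> = 0")
  case True
  have "0 < - \<sigma> * ln (1 - p)"
    using assms by (simp add: mult_pos_neg)
  then show ?thesis
    using True assms by (simp add: exgpd_cdf_def exgpd_quantile_def)
next
  case False
  then show ?thesis
    using exgpd_quantile_base[OF False assms] assms by (simp add: exgpd_cdf_def powr_powr)
qed

lemma exgpd_quantile_less: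
  assumes "\<sigma> > 0" "\<xi> < 0" "0 < p" "p < 1"
  shows "exgpd_quantile \<sigma> \<xi> p < ln (- \<sigma> / \<xi>)"
  using exgpd_quantile_base[of \<xi> \<sigma> p] exgpd_base_pos_iff[OF assms(1,2), of "exgpd_quantile \<sigma> \<xi> p"]
    assms by simp

lemma exgpd_tail_moments:
  assumes "distributed M lborel Y (\<lambda>y. ennreal (exgpd_density \<sigma> \<xi> y))"
    and "\<sigma> > 0" "\<xi> < 0 \<Longrightarrow> v < ln (- \<sigma> / \<xi>)"
  shows "integrable M (\<lambda>\<omega>. (Y \<omega> - v) * indicator {v<..} (Y \<omega>))"
    and "(\<integral>\<omega>. (Y \<omega> - v) * indicator {v<..} (Y \<omega>) \<partial>M) = exgpd_stop_loss \<sigma> \<xi> v"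
    and "measure M {\<omega> \<in> space M. v < Y \<omega>} = exgpd_sf \<sigma> \<xi> v"
proof -
  have "(\<integral>\<^sup>+y. ennreal (exgpd_density \<sigma> \<xi> y) * ennreal ((y - v) * indicator {v<..} y) \<partial>lborel)
      = ennreal (exgpd_stop_loss \<sigma> \<xi> v)"
    using nn_integral_excess_eq_nn_integral_tail[of "\<lambda>y. ennreal (exgpd_density \<sigma> \<xi> y)" v]
      nn_integral_exgpd_density_Ioi[OF assms(2)] nn_integral_exgpd_sf_Ioi[OF assms(2,3)]
    by simp
  from distributed_integrable_integral_eq[OF assms(1) _ _ exgpd_stop_loss_nonneg[OF assms(2,3)] this]
  show "integrable M (\<lambda>\<omega>. (Y \<omega> - v) * indicator {v<..} (Y \<omega>))"
    and "(\<integral>\<omega>. (Y \<omega> - v) * indicator {v<..} (Y \<omega>) \<partial>M) = exgpd_stop_loss \<sigma> \<xi> v"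
    by (auto simp: indicator_def)
  have "emeasure M (Y -` {v<..} \<inter> space M) = ennreal (exgpd_sf \<sigma> \<xi> v)"
    using distributed_emeasure[OF assms(1), of "{v<..}"] nn_integral_exgpd_density_Ioi[OF assms(2)]
    by simp
  moreover have "Y -` {v<..} \<inter> space M = {\<omega> \<in> space M. v < Y \<omega>}"
    by auto
  ultimately show "measure M {\<omega> \<in> space M. v < Y \<omega>} = exgpd_sf \<sigma> \<xi> v"
    by (simp add: measure_def exgpd_sf_nonneg)
qed

theorem mainTheorem15:
  fixes M :: "'a measure" and Y :: "'a \<Rightarrow> real" and \<sigma> \<xi> u :: real
  assumes "prob_space M"
    and "distributed M lborel Y (\<lambda>y. ennreal (exgpd_density \<sigma> \<xi> y))"
    and "\<sigma> > 0"
    and "\<xi> < 0 \<Longrightarrow> u < ln (- \<sigma> / \<xi>)"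
  shows "integrable M (\<lambda>\<omega>. (Y \<omega> - u) * indicator {u<..} (Y \<omega>))
    \<and> measure M {\<omega> \<in> space M. u < Y \<omega>} > 0
    \<and> mean_excess M Y u =
        (if \<xi> > 0 then inverse (exgpd_sf \<sigma> \<xi> u) * inc_beta0 (inverse (1 + \<xi> * exp u / \<sigma>)) (1 / \<xi>)
         else if \<xi> < 0 then inverse (exgpd_sf \<sigma> \<xi> u) * inc_beta0 (1 + \<xi> * exp u / \<sigma>) (1 - 1 / \<xi>)
         else exp (exp u / \<sigma>) * upper_gamma 0 (exp u / \<sigma>))
    \<and> (\<forall>p. 0 < p \<and> p < 1 \<longrightarrow>
          exgpd_cdf \<sigma> \<xi> (exgpd_quantile \<sigma> \<xi> p) = p
        \<and> integrable M (\<lambda>\<omega>. Y \<omega> * indicator {exgpd_quantile \<sigma> \<xi> p<..} (Y \<omega>))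
        \<and> cond_tail_exp M Y (exgpd_quantile \<sigma> \<xi> p)
            = exgpd_quantile \<sigma> \<xi> p + mean_excess M Y (exgpd_quantile \<sigma> \<xi> p))"
proof -
  interpret prob_space M by fact
  note moments = exgpd_tail_moments[OF assms(2,3)]
  have tail_prob_pos: "prob {\<omega> \<in> space M. v < Y \<omega>} > 0" if "\<xi> < 0 \<Longrightarrow> v < ln (- \<sigma> / \<xi>)" for v
    using moments(3)[OF that] exgpd_sf_pos[OF assms(3) that] by simp
  have mean_excess: "mean_excess M Y u = exgpd_stop_loss \<sigma> \<xi> u / exgpd_sf \<sigma> \<xi> u"
    using moments(2,3)[OF assms(4)] by (simp add: mean_excess_def)
  have "Y \<in> borel_measurable M"
    using distributed_measurable[OF assms(2)] by simp
  note cte = cond_tail_exp_eq_add_mean_excess[OF this moments(1) tail_prob_pos]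
  show ?thesis
    using moments(1)[OF assms(4)] tail_prob_pos[OF assms(4)]
      exgpd_cdf_quantile[OF assms(3)] exgpd_quantile_less[OF assms(3)] cte
    unfolding mean_excess exgpd_stop_loss_div_sf by blast
qed

end
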